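(* Let $\theta_{\min}\ge 1/2$, and let $\mathcal S$ be a compatible community of a population with minimum participation threshold $\theta_{\min}$, with $|\mathcal S|\ge k$. Then there exist at least $k(2\theta_{\min}-1)$ users $i\in\mathcal S$ which are compatible with all other users in $\mathcal S$, i.e., whose speech point $p_i$ lies in $[l_j,r_j]$ for every $j\in\mathcal S$.
   Context: Users $1,\dots,n$ each have a closed interval $[l_i,r_i]$, a speech point $p_i\in[l_i,r_i]$ and a participation threshold $\theta_i\in[0,1]$, with $\theta_{\min}=\min_i\theta_i$. A set $\mathcal S$ of users is a compatible community if for every $i\in\mathcal S$, $|\{j\in\mathcal S\setminus\{i\}:p_j\in[l_i,r_i]\}|\ge\theta_i|\mathcal S\setminus\{i\}|$. *)

theory Defs
  imports Complex_Main
begin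

definition population ::
  "'u set \<Rightarrow> ('u \<Rightarrow> real) \<Rightarrow> ('u \<Rightarrow> real) \<Rightarrow> ('u \<Rightarrow> real) \<Rightarrow> ('u \<Rightarrow> real) \<Rightarrow> bool" where
  "population U l r p theta \<longleftrightarrow> finite U \<and> U \<noteq> {} \<and>
     (\<forall>i\<in>U. l i \<le> p i \<and> p i \<le> r i \<and> 0 \<le> theta i \<and> theta i \<le> 1)"

definition theta_min :: "'u set \<Rightarrow> ('u \<Rightarrow> real) \<Rightarrow> real" where
  "theta_min U theta = Min (theta ` U)"

definition compatible_community ::
  "'u set \<Rightarrow> ('u \<Rightarrow> real) \<Rightarrow> ('u \<Rightarrow> real) \<Rightarrow> ('u \<Rightarrow> real) \<Rightarrow> ('u \<Rightarrow> real) \<Rightarrow> 'u set \<Rightarrow> bool" where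
  "compatible_community U l r p theta S \<longleftrightarrow> S \<subseteq> U \<and>
     (\<forall>i\<in>S. real (card {j \<in> S - {i}. p j \<in> {l i..r i}}) \<ge> theta i * real (card (S - {i})))"

end

theory Submission
  imports Defs
begin

text \<open>Every member of a compatible community S with n members sees at least
  \<open>\<theta>\<^sub>m\<^sub>i\<^sub>n (n - 1) + 1\<close> speech points of S in its interval (its own included).
  Take the member of S with the largest speech point among those lying left of
  some interval \<open>[l j, r j]\<close>: all of them lie left of that interval, so together
  with the points inside it they show that at most \<open>n - (\<theta>\<^sub>m\<^sub>i\<^sub>n (n - 1) + 1)\<close>
  members lie left of some interval. Symmetrically for the right, so at least
  \<open>2 (\<theta>\<^sub>m\<^sub>i\<^sub>n (n - 1) + 1) - n \<ge> n (2 \<theta>\<^sub>m\<^sub>i\<^sub>n - 1)\<close> members lie in every interval.\<close>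

lemma card_left_of_some_interval_le:
  fixes p l r :: "'u \<Rightarrow> 'a::linorder"
  assumes "finite S" and "S \<noteq> {}"
  shows "\<exists>j\<in>S. card {i\<in>S. \<exists>j'\<in>S. p i < l j'} + card {i\<in>S. p i \<in> {l j..r j}} \<le> card S"
proof (cases "{i\<in>S. \<exists>j'\<in>S. p i < l j'} = {}")
  case True
  obtain j where "j \<in> S" using \<open>S \<noteq> {}\<close> by blast
  moreover have "card {i\<in>S. p i \<in> {l j..r j}} \<le> card S"
    using \<open>finite S\<close> by (intro card_mono) auto
  ultimately show ?thesis unfolding True by auto
next
  case False
  define A where "A = {i\<in>S. \<exists>j'\<in>S. p i < l j'}"
  have "finite A" using \<open>finite S\<close> by (simp add: A_def)
  have "Max (p ` A) \<in> p ` A"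
    using \<open>finite A\<close> False by (simp add: A_def)
  then obtain i0 where "i0 \<in> A" and "p i0 = Max (p ` A)" by force
  then have i0_max: "\<forall>i\<in>A. p i \<le> p i0" using \<open>finite A\<close> by simp
  obtain j where "j \<in> S" and "p i0 < l j" using \<open>i0 \<in> A\<close> by (auto simp: A_def)
  define C where "C = {i\<in>S. p i \<in> {l j..r j}}"
  have "A \<inter> C = {}"
    using i0_max \<open>p i0 < l j\<close> by (force simp: C_def)
  then have "card A + card C = card (A \<union> C)"
    using \<open>finite S\<close> by (intro card_Un_disjoint[symmetric]) (auto simp: A_def C_def)
  also have "\<dots> \<le> card S"
    using \<open>finite S\<close> by (intro card_mono) (auto simp: A_def C_def)
  finally show ?thesis using \<open>j \<in> S\<close> by (auto simp: A_def C_def)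
qed

lemma card_right_of_some_interval_le:
  fixes p l r :: "'u \<Rightarrow> 'a::linordered_ab_group_add"
  assumes "finite S" and "S \<noteq> {}"
  shows "\<exists>j\<in>S. card {i\<in>S. \<exists>j'\<in>S. r j' < p i} + card {i\<in>S. p i \<in> {l j..r j}} \<le> card S"
proof -
  have mirror: "{i\<in>S. - p i \<in> {- r j..- l j}} = {i\<in>S. p i \<in> {l j..r j}}" for j
    by auto
  show ?thesis
    using card_left_of_some_interval_le[OF assms, of "\<lambda>i. - p i" "\<lambda>j. - r j" "\<lambda>j. - l j"]
    unfolding mirror neg_less_iff_less .
qed

lemma card_in_all_intervals_ge:
  fixes p l r :: "'u \<Rightarrow> 'a::linordered_ab_group_add" and m :: real
  assumes "finite S" and "S \<noteq> {}"
    and in_interval: "\<And>j. j \<in> S \<Longrightarrow> m \<le> real (card {i\<in>S. p i \<in> {l j..r j}})"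
  shows "2 * m \<le> real (card S) + real (card {i\<in>S. \<forall>j\<in>S. p i \<in> {l j..r j}})"
proof -
  define L where "L = {i\<in>S. \<exists>j\<in>S. p i < l j}"
  define R where "R = {i\<in>S. \<exists>j\<in>S. r j < p i}"
  define G where "G = {i\<in>S. \<forall>j\<in>S. p i \<in> {l j..r j}}"
  have "S \<subseteq> L \<union> R \<union> G"
    by (auto simp: L_def R_def G_def not_less)
  then have "card S \<le> card (L \<union> R \<union> G)"
    using \<open>finite S\<close> by (intro card_mono) (auto simp: L_def R_def G_def)
  also have "\<dots> \<le> card L + card R + card G"
    using card_Un_le[of L R] card_Un_le[of "L \<union> R" G] by linarith
  finally have "card S \<le> card L + card R + card G" .
  moreover have "real (card L) + m \<le> real (card S)"
    using card_left_of_some_interval_le[OF assms(1,2), of p l r] in_interval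
    unfolding L_def by force
  moreover have "real (card R) + m \<le> real (card S)"
    using card_right_of_some_interval_le[OF assms(1,2), of r p l] in_interval
    unfolding R_def by force
  ultimately show ?thesis unfolding G_def by linarith
qed

lemma compatible_community_card_in_interval_ge:
  assumes "population U l r p theta" and "compatible_community U l r p theta S"
    and "finite S" and "j \<in> S"
  shows "theta j * (real (card S) - 1) + 1 \<le> real (card {i\<in>S. p i \<in> {l j..r j}})"
proof -
  have "p j \<in> {l j..r j}"
    using assms unfolding population_def compatible_community_def by auto
  then have "{i\<in>S. p i \<in> {l j..r j}} = insert j {i\<in>S - {j}. p i \<in> {l j..r j}}"
    using \<open>j \<in> S\<close> by auto
  then have "card {i\<in>S. p i \<in> {l j..r j}} = card {i\<in>S - {j}. p i \<in> {l j..r j}} + 1"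
    using \<open>finite S\<close> by simp
  moreover have "card S \<ge> 1"
    using \<open>finite S\<close> \<open>j \<in> S\<close> by (metis One_nat_def Suc_leI card_gt_0_iff empty_iff)
  then have "real (card (S - {j})) = real (card S) - 1"
    using \<open>j \<in> S\<close> by (simp add: of_nat_diff)
  moreover have "theta j * real (card (S - {j})) \<le> real (card {i\<in>S - {j}. p i \<in> {l j..r j}})"
    using assms(2) \<open>j \<in> S\<close> unfolding compatible_community_def by auto
  ultimately show ?thesis by simp
qed

lemma theta_min_le:
  assumes "population U l r p theta" and "i \<in> U"
  shows "theta_min U theta \<le> theta i"
  using assms unfolding population_def theta_min_def by simp

theorem lemma16:
  fixes U S :: "'u set" and l r p theta :: "'u \<Rightarrow> real" and k :: nat
  assumes "population U l r p theta"
    and "theta_min U theta \<ge> 1/2"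
    and "compatible_community U l r p theta S"
    and "card S \<ge> k"
  shows "real (card {i \<in> S. \<forall>j\<in>S. p i \<in> {l j..r j}}) \<ge> real k * (2 * theta_min U theta - 1)"
proof (cases "S = {}")
  case True
  then show ?thesis using assms(4) by simp
next
  case False
  define t where "t = theta_min U theta"
  define n where "n = real (card S)"
  have "S \<subseteq> U" and "finite S"
    using assms(1,3) finite_subset unfolding population_def compatible_community_def by auto
  have "n \<ge> 1" using \<open>finite S\<close> False by (simp add: n_def Suc_leI card_gt_0_iff)
  have in_interval: "t * (n - 1) + 1 \<le> real (card {i\<in>S. p i \<in> {l j..r j}})" if "j \<in> S" for j
  proof -
    have "t \<le> theta j" using theta_min_le[OF assms(1)] \<open>S \<subseteq> U\<close> that by (auto simp: t_def)
    then have "t * (n - 1) \<le> theta j * (n - 1)" using \<open>n \<ge> 1\<close> by (simp add: mult_right_mono)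
    then show ?thesis
      using compatible_community_card_in_interval_ge[OF assms(1,3) \<open>finite S\<close> that] by (simp add: n_def)
  qed
  have "t \<le> 1"
    using False \<open>S \<subseteq> U\<close> theta_min_le[OF assms(1)] assms(1)
    unfolding population_def t_def by (meson all_not_in_conv order_trans subsetD)
  have "real k * (2 * t - 1) \<le> n * (2 * t - 1)"
    using assms(2,4) by (intro mult_right_mono) (auto simp: t_def n_def)
  moreover have "2 * (t * (n - 1) + 1) \<le> n + real (card {i\<in>S. \<forall>j\<in>S. p i \<in> {l j..r j}})"
    using card_in_all_intervals_ge[OF \<open>finite S\<close> False in_interval] by (simp add: n_def)
  ultimately show ?thesis
    using \<open>t \<le> 1\<close> by (simp add: t_def algebra_simps)
qed

end
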